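(* For every integer $N\ge 1$, the number of tuples $(\mu_1,\dots,\mu_4;d_1,\dots,d_4)\in P^4\times\mathbb Z^4$ with $d_1+d_2+d_3+d_4$ odd and $$6\sum_{i=1}^4|\mu_i|+6\sum_{i=1}^4\binom{d_i}{2}+d_1+d_2+3d_3+3d_4=N$$ equals the number of tuples $(\alpha_1,\dots,\alpha_4;e_1,\dots,e_4)\in P^4\times\mathbb Z^4$ with $e_1+e_2+e_3+e_4$ odd and $$6\sum_{i=1}^4|\alpha_i|+6\sum_{i=1}^4\binom{e_i}{2}+0e_1+0e_2+2e_3+2e_4+1=N.$$
   Context: $P$ denotes the set of all integer partitions into positive parts (including the empty partition); for a partition $\lambda$, $|\lambda|$ is the sum of its parts. For $d\in\mathbb Z$, $\binom{d}{2}=d(d-1)/2$. *)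

theory Defs
  imports Main "HOL-Library.Multiset"
begin

definition partitions :: "nat multiset set" where
  "partitions = {\<mu>. \<forall>x\<in>#\<mu>. 0 < x}"

definition psize :: "nat multiset \<Rightarrow> int" where
  "psize \<mu> = int (sum_mset \<mu>)"

definition binom2 :: "int \<Rightarrow> int" where
  "binom2 d = d * (d - 1) div 2"

end

theory Submission
  imports Defs
begin

text \<open>
  Both sides count pairs (partition data, integer vector) in which the partition part is
  untouched and only the vector \<open>d \<in> \<int>\<^sup>4\<close> differs.  The proof is a change of variables
  \<open>e = change_vars d\<close>, \<open>2 e = (d1-d2+d3+d4+1, -d1+d2+d3+d4+1, -d1-d2+d3-d4+1, -d1-d2-d3+d4+1)\<close>,
  which is integral exactly on the sublattice of vectors with odd coordinate sum, maps that
  sublattice bijectively onto itself, and transforms the weight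
  \<open>6 \<Sum> binom2 d\<^sub>i + d1 + d2 + 3 d3 + 3 d4\<close> into \<open>6 \<Sum> binom2 e\<^sub>i + 2 e3 + 2 e4 + 1\<close>
  (an identity of quadratic forms, checked after multiplying by 4).
\<close>

lemma card_eq_by_bij_on_second:
  assumes bij: "bij_betw h S T"
    and transfer: "\<And>m d. d \<in> S \<Longrightarrow> R m (h d) = Q m d"
    and Q_supp: "\<And>m d. Q m d \<Longrightarrow> d \<in> S"
    and R_supp: "\<And>m e. R m e \<Longrightarrow> e \<in> T"
  shows "card {(m, d). Q m d} = card {(m, e). R m e}"
proof (rule bij_betw_same_card)
  let ?h' = "the_inv_into S h"
  have h'_in: "?h' e \<in> S" and h_h': "h (?h' e) = e" if "e \<in> T" for e
    using that bij by (auto simp: bij_betw_def the_inv_into_f_f the_inv_into_into f_the_inv_into_f)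
  show "bij_betw (map_prod id h) {(m, d). Q m d} {(m, e). R m e}"
  proof (rule bij_betw_byWitness[where f' = "map_prod id ?h'"])
    show "\<forall>x\<in>{(m, d). Q m d}. map_prod id ?h' (map_prod id h x) = x"
      using bij Q_supp by (auto simp: bij_betw_def the_inv_into_f_f)
    show "\<forall>y\<in>{(m, e). R m e}. map_prod id h (map_prod id ?h' y) = y"
      using R_supp h_h' by auto
    show "map_prod id h ` {(m, d). Q m d} \<subseteq> {(m, e). R m e}"
      using Q_supp transfer by auto
    show "map_prod id ?h' ` {(m, e). R m e} \<subseteq> {(m, d). Q m d}"
      using R_supp h'_in h_h' transfer by (auto, metis)
  qed
qed

definition odd_lattice :: "(int \<times> int \<times> int \<times> int) set" where
  "odd_lattice = {(d1, d2, d3, d4). odd (d1 + d2 + d3 + d4)}"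

text \<open>The change of variables and its inverse; the divisions are exact on the odd lattice.\<close>
definition change_vars :: "int \<times> int \<times> int \<times> int \<Rightarrow> int \<times> int \<times> int \<times> int" where
  "change_vars = (\<lambda>(a, b, c, d).
     ((a - b + c + d + 1) div 2, (- a + b + c + d + 1) div 2,
      (- a - b + c - d + 1) div 2, (- a - b - c + d + 1) div 2))"

definition change_vars_inv :: "int \<times> int \<times> int \<times> int \<Rightarrow> int \<times> int \<times> int \<times> int" where
  "change_vars_inv = (\<lambda>(a, b, c, d).
     ((a - b - c - d + 1) div 2, (- a + b - c - d + 1) div 2,
      (a + b + c - d - 1) div 2, (a + b - c + d - 1) div 2))"

lemma change_vars_linear:
  assumes "odd (a + b + c + d)" and "change_vars (a, b, c, d) = (e1, e2, e3, e4)"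
  shows "2 * e1 = a - b + c + d + 1" "2 * e2 = - a + b + c + d + 1"
    "2 * e3 = - a - b + c - d + 1" "2 * e4 = - a - b - c + d + 1"
proof -
  have "e1 = (a - b + c + d + 1) div 2" "e2 = (- a + b + c + d + 1) div 2"
    "e3 = (- a - b + c - d + 1) div 2" "e4 = (- a - b - c + d + 1) div 2"
    using assms(2) by (auto simp: change_vars_def)
  with assms(1) show "2 * e1 = a - b + c + d + 1" "2 * e2 = - a + b + c + d + 1"
    "2 * e3 = - a - b + c - d + 1" "2 * e4 = - a - b - c + d + 1"
    by presburger+
qed

lemma change_vars_inv_linear:
  assumes "odd (e1 + e2 + e3 + e4)" and "change_vars_inv (e1, e2, e3, e4) = (a, b, c, d)"
  shows "2 * a = e1 - e2 - e3 - e4 + 1" "2 * b = - e1 + e2 - e3 - e4 + 1"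
    "2 * c = e1 + e2 + e3 - e4 - 1" "2 * d = e1 + e2 - e3 + e4 - 1"
proof -
  have "a = (e1 - e2 - e3 - e4 + 1) div 2" "b = (- e1 + e2 - e3 - e4 + 1) div 2"
    "c = (e1 + e2 + e3 - e4 - 1) div 2" "d = (e1 + e2 - e3 + e4 - 1) div 2"
    using assms(2) by (auto simp: change_vars_inv_def)
  with assms(1) show "2 * a = e1 - e2 - e3 - e4 + 1" "2 * b = - e1 + e2 - e3 - e4 + 1"
    "2 * c = e1 + e2 + e3 - e4 - 1" "2 * d = e1 + e2 - e3 + e4 - 1"
    by presburger+
qed

lemma bij_change_vars: "bij_betw change_vars odd_lattice odd_lattice"
proof (rule bij_betw_byWitness[where f' = change_vars_inv])
  have fwd: "change_vars x \<in> odd_lattice \<and> change_vars_inv (change_vars x) = x"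
    if "x \<in> odd_lattice" for x
  proof -
    obtain a b c d where x: "x = (a, b, c, d)" by (metis prod_cases4)
    obtain e1 e2 e3 e4 where e: "change_vars (a, b, c, d) = (e1, e2, e3, e4)"
      by (metis prod_cases4)
    have odd: "odd (a + b + c + d)" using that x by (simp add: odd_lattice_def)
    note lin = change_vars_linear[OF odd e]
    have "e1 + e2 + e3 + e4 = - a - b + c + d + 2" using lin by linarith
    then have "odd (e1 + e2 + e3 + e4)" using odd by presburger
    moreover have "e1 - e2 - e3 - e4 + 1 = 2 * a" "- e1 + e2 - e3 - e4 + 1 = 2 * b"
      "e1 + e2 + e3 - e4 - 1 = 2 * c" "e1 + e2 - e3 + e4 - 1 = 2 * d"
      using lin by linarith+
    ultimately show ?thesis using x e by (simp add: odd_lattice_def change_vars_inv_def)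
  qed
  have bwd: "change_vars_inv y \<in> odd_lattice \<and> change_vars (change_vars_inv y) = y"
    if "y \<in> odd_lattice" for y
  proof -
    obtain e1 e2 e3 e4 where y: "y = (e1, e2, e3, e4)" by (metis prod_cases4)
    obtain a b c d where x: "change_vars_inv (e1, e2, e3, e4) = (a, b, c, d)"
      by (metis prod_cases4)
    have odd: "odd (e1 + e2 + e3 + e4)" using that y by (simp add: odd_lattice_def)
    note lin = change_vars_inv_linear[OF odd x]
    have "a + b + c + d = e1 + e2 - e3 - e4" using lin by linarith
    then have "odd (a + b + c + d)" using odd by presburger
    moreover have "a - b + c + d + 1 = 2 * e1" "- a + b + c + d + 1 = 2 * e2"
      "- a - b + c - d + 1 = 2 * e3" "- a - b - c + d + 1 = 2 * e4"
      using lin by linarith+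
    ultimately show ?thesis using y x by (simp add: odd_lattice_def change_vars_def)
  qed
  show "\<forall>x\<in>odd_lattice. change_vars_inv (change_vars x) = x" using fwd by blast
  show "\<forall>y\<in>odd_lattice. change_vars (change_vars_inv y) = y" using bwd by blast
  show "change_vars ` odd_lattice \<subseteq> odd_lattice" using fwd by blast
  show "change_vars_inv ` odd_lattice \<subseteq> odd_lattice" using bwd by blast
qed

text \<open>\<open>binom2\<close> as a polynomial, which lets the weight identity become ring arithmetic.\<close>
lemma six_binom2: "6 * binom2 d = 3 * d * d - 3 * d"
proof -
  obtain k where k: "d * (d - 1) = 2 * k" by (rule evenE[of "d * (d - 1)"]) auto
  then have "binom2 d = k" by (simp add: binom2_def)
  with k show ?thesis by (simp add: algebra_simps)
qed

lemma weight_change_vars: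
  assumes "odd (a + b + c + d)" and "change_vars (a, b, c, d) = (e1, e2, e3, e4)"
  shows "6 * (binom2 e1 + binom2 e2 + binom2 e3 + binom2 e4) + 2 * e3 + 2 * e4 + 1
       = 6 * (binom2 a + binom2 b + binom2 c + binom2 d) + a + b + 3 * c + 3 * d"
proof -
  note lin = change_vars_linear[OF assms]
  have "4 * (3*e1*e1 - 3*e1 + (3*e2*e2 - 3*e2) + (3*e3*e3 - 3*e3) + (3*e4*e4 - 3*e4)
              + 2*e3 + 2*e4 + 1)
      = 4 * (3*a*a - 3*a + (3*b*b - 3*b) + (3*c*c - 3*c) + (3*d*d - 3*d)
              + a + b + 3*c + 3*d)"
    using lin by algebra
  then show ?thesis by (simp add: distrib_left six_binom2)
qed

theorem lemma3p5:
  fixes N :: int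
  assumes "N \<ge> 1"
  shows "card {((m1, m2, m3, m4), (d1, d2, d3, d4)).
            m1 \<in> partitions \<and> m2 \<in> partitions \<and> m3 \<in> partitions \<and> m4 \<in> partitions \<and>
            odd (d1 + d2 + d3 + d4) \<and>
            6 * (psize m1 + psize m2 + psize m3 + psize m4)
            + 6 * (binom2 d1 + binom2 d2 + binom2 d3 + binom2 d4)
            + d1 + d2 + 3 * d3 + 3 * d4 = N}
       = card {((a1, a2, a3, a4), (e1, e2, e3, e4)).
            a1 \<in> partitions \<and> a2 \<in> partitions \<and> a3 \<in> partitions \<and> a4 \<in> partitions \<and>
            odd (e1 + e2 + e3 + e4) \<and>
            6 * (psize a1 + psize a2 + psize a3 + psize a4)
            + 6 * (binom2 e1 + binom2 e2 + binom2 e3 + binom2 e4)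
            + 0 * e1 + 0 * e2 + 2 * e3 + 2 * e4 + 1 = N}"
proof (rule card_eq_by_bij_on_second[OF bij_change_vars], goal_cases)
  case (1 m d)
  obtain m1 m2 m3 m4 where m: "m = (m1, m2, m3, m4)" by (metis prod_cases4)
  obtain a b c d' where d: "d = (a, b, c, d')" by (metis prod_cases4)
  obtain e1 e2 e3 e4 where e: "change_vars (a, b, c, d') = (e1, e2, e3, e4)"
    by (metis prod_cases4)
  have odd_d: "odd (a + b + c + d')" using 1 d by (simp add: odd_lattice_def)
  have "change_vars d \<in> odd_lattice" using bij_change_vars 1 by (rule bij_betw_apply)
  then have odd_e: "odd (e1 + e2 + e3 + e4)" using d e by (simp add: odd_lattice_def)
  have weight: "6 * (psize m1 + psize m2 + psize m3 + psize m4)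
        + 6 * (binom2 e1 + binom2 e2 + binom2 e3 + binom2 e4) + 0 * e1 + 0 * e2 + 2 * e3 + 2 * e4 + 1
      = 6 * (psize m1 + psize m2 + psize m3 + psize m4)
        + 6 * (binom2 a + binom2 b + binom2 c + binom2 d') + a + b + 3 * c + 3 * d'"
    using weight_change_vars[OF odd_d e] by simp
  show ?case unfolding m d e prod.case weight using odd_d odd_e by simp
next
  case (2 m d)
  then show ?case by (simp add: odd_lattice_def split: prod.splits)
next
  case (3 m e)
  then show ?case by (simp add: odd_lattice_def split: prod.splits)
qed

end
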